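(* Assume $\ell(y,x,\theta)\ge0$ for all $\theta$ and $\nu$-a.e. $(x,y)$, $L(\theta)<\infty$ for all $\theta$, and let $\pi$ be a prior on $\Theta$. Suppose $\lambda^\star>0$ is a local (or global) minimizer of $\lambda\mapsto\mathrm{EB}_0(\pi_J^\lambda,\lambda)$ on $(0,\infty)$, that this function is differentiable at $\lambda^\star$, and that its derivative may be computed by differentiating under the expectations $\mathbb{E}_{D\sim\nu^n}$, $\mathbb{E}_\pi$ and $\mathbb{E}_\nu$ (with all quantities below finite). Then, with $\rho^\star=\rho^\star_{\lambda^\star}$, $$\mathbb{E}_{D\sim\nu^n}\big[\mathcal{B}(\rho^\star(\cdot\mid D),\lambda^\star)\big]=\frac{1}{n}\mathbb{E}_{D\sim\nu^n}\big[\mathrm{KL}(\rho^\star(\cdot\mid D)\,\|\,\pi)\big].$$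
   Context: Let $\nu$ be a probability distribution on pairs $(x,y)$, $\Theta$ a parameter space, and for each $\theta\in\Theta$ let $p(y\mid x,\theta)>0$ be a conditional density; loss $\ell(y,x,\theta)=-\ln p(y\mid x,\theta)$, expected loss $L(\theta)=\mathbb{E}_\nu[\ell(y,x,\theta)]$. A sample $D=\{(x_i,y_i)\}_{i=1}^n\sim\nu^n$ is i.i.d.; $p(D\mid\theta)=\prod_{i=1}^n p(y_i\mid x_i,\theta)$. The cumulant generating function is $J_\theta(\lambda)=\ln\mathbb{E}_\nu[e^{\lambda(L(\theta)-\ell(y,x,\theta))}]$ with derivative $J_\theta'$. For a prior $\pi$ and $\lambda>0$: - Jensen prior: $\pi_J^\lambda(\theta)=\pi(\theta)e^{-nJ_\theta(\lambda)}/\mathbb{E}_\pi[e^{-nJ_\theta(\lambda)}]$; - posterior: $\rho^\star_\lambda(\theta\mid D)=p(D\mid\theta)^\lambda\pi_J^\lambda(\theta)/\mathbb{E}_{\pi_J^\lambda}[p(D\mid\theta)^\lambda]$; - $R_\lambda(\pi)=\ln\mathbb{E}_\pi[e^{nJ_\theta(\lambda)}]$; - $\mathrm{EB}_0(\pi,\lambda)=\frac{1}{\lambda n}\mathbb{E}_{D\sim\nu^n}\big[-\ln\mathbb{E}_\pi[p(D\mid\theta)^\lambda]\big]+\frac{1}{\lambda n}R_\lambda(\pi)$; - for a distribution $\rho$ on $\Theta$: $\mathcal{B}(\rho,\lambda)=\mathbb{E}_\rho\big[\lambda J_\theta'(\lambda)-J_\theta(\lambda)\big]$. *)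

theory Defs
  imports "HOL-Probability.Probability"
begin

text \<open>Setting: \<nu> is a probability measure on pairs z = (x,y); the parameter space is
  the space of the prior \<pi>; p y x \<theta> is the conditional density p(y|x,\<theta>).\<close>

definition loss :: "('y \<Rightarrow> 'x \<Rightarrow> 'a \<Rightarrow> real) \<Rightarrow> 'x \<times> 'y \<Rightarrow> 'a \<Rightarrow> real" where
  "loss p z \<theta> = - ln (p (snd z) (fst z) \<theta>)"

definition Lexp :: "('x \<times> 'y) measure \<Rightarrow> ('y \<Rightarrow> 'x \<Rightarrow> 'a \<Rightarrow> real) \<Rightarrow> 'a \<Rightarrow> real" where
  "Lexp \<nu> p \<theta> = (\<integral>z. loss p z \<theta> \<partial>\<nu>)"

definition cgf :: "('x \<times> 'y) measure \<Rightarrow> ('y \<Rightarrow> 'x \<Rightarrow> 'a \<Rightarrow> real) \<Rightarrow> 'a \<Rightarrow> real \<Rightarrow> real" where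
  "cgf \<nu> p \<theta> l = ln (\<integral>z. exp (l * (Lexp \<nu> p \<theta> - loss p z \<theta>)) \<partial>\<nu>)"

definition cgf' :: "('x \<times> 'y) measure \<Rightarrow> ('y \<Rightarrow> 'x \<Rightarrow> 'a \<Rightarrow> real) \<Rightarrow> 'a \<Rightarrow> real \<Rightarrow> real" where
  "cgf' \<nu> p \<theta> l = deriv (cgf \<nu> p \<theta>) l"

definition sample :: "('x \<times> 'y) measure \<Rightarrow> nat \<Rightarrow> (nat \<Rightarrow> 'x \<times> 'y) measure" where
  "sample \<nu> n = PiM {..<n} (\<lambda>_. \<nu>)"

definition lik :: "('y \<Rightarrow> 'x \<Rightarrow> 'a \<Rightarrow> real) \<Rightarrow> nat \<Rightarrow> (nat \<Rightarrow> 'x \<times> 'y) \<Rightarrow> 'a \<Rightarrow> real" where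
  "lik p n D \<theta> = (\<Prod>i<n. p (snd (D i)) (fst (D i)) \<theta>)"

definition jensen_prior :: "('x \<times> 'y) measure \<Rightarrow> ('y \<Rightarrow> 'x \<Rightarrow> 'a \<Rightarrow> real) \<Rightarrow> nat \<Rightarrow> 'a measure \<Rightarrow> real \<Rightarrow> 'a measure" where
  "jensen_prior \<nu> p n \<pi> l = density \<pi> (\<lambda>\<theta>. ennreal (exp (- real n * cgf \<nu> p \<theta> l) /
      (\<integral>\<theta>'. exp (- real n * cgf \<nu> p \<theta>' l) \<partial>\<pi>)))"

definition posterior :: "('x \<times> 'y) measure \<Rightarrow> ('y \<Rightarrow> 'x \<Rightarrow> 'a \<Rightarrow> real) \<Rightarrow> nat \<Rightarrow> 'a measure \<Rightarrow> real
    \<Rightarrow> (nat \<Rightarrow> 'x \<times> 'y) \<Rightarrow> 'a measure" where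
  "posterior \<nu> p n \<pi> l D = density (jensen_prior \<nu> p n \<pi> l) (\<lambda>\<theta>. ennreal (lik p n D \<theta> powr l /
      (\<integral>\<theta>'. lik p n D \<theta>' powr l \<partial>(jensen_prior \<nu> p n \<pi> l))))"

definition Rterm :: "('x \<times> 'y) measure \<Rightarrow> ('y \<Rightarrow> 'x \<Rightarrow> 'a \<Rightarrow> real) \<Rightarrow> nat \<Rightarrow> real \<Rightarrow> 'a measure \<Rightarrow> real" where
  "Rterm \<nu> p n l \<pi> = ln (\<integral>\<theta>. exp (real n * cgf \<nu> p \<theta> l) \<partial>\<pi>)"

definition EB0 :: "('x \<times> 'y) measure \<Rightarrow> ('y \<Rightarrow> 'x \<Rightarrow> 'a \<Rightarrow> real) \<Rightarrow> nat \<Rightarrow> 'a measure \<Rightarrow> real \<Rightarrow> real" where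
  "EB0 \<nu> p n \<pi> l =
     1 / (l * real n) * (\<integral>D. - ln (\<integral>\<theta>. lik p n D \<theta> powr l \<partial>\<pi>) \<partial>sample \<nu> n)
     + 1 / (l * real n) * Rterm \<nu> p n l \<pi>"

definition Bterm :: "('x \<times> 'y) measure \<Rightarrow> ('y \<Rightarrow> 'x \<Rightarrow> 'a \<Rightarrow> real) \<Rightarrow> 'a measure \<Rightarrow> real \<Rightarrow> real" where
  "Bterm \<nu> p \<rho> l = (\<integral>\<theta>. l * cgf' \<nu> p \<theta> l - cgf \<nu> p \<theta> l \<partial>\<rho>)"

text \<open>KL(\<rho> || \<pi>) with natural logarithm (library: KL_divergence b M N = E_N[log_b dN/dM]).\<close>
definition KL :: "'a measure \<Rightarrow> 'a measure \<Rightarrow> real" where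
  "KL \<rho> \<pi> = KL_divergence (exp 1) \<pi> \<rho>"

end

theory Submission
  imports Defs
begin

text \<open>Write Z(l) = E_pi[exp(-n J_theta(l))] and N_D(l) = E_pi[p(D|theta)^l exp(-n J_theta(l))].
  Under the Jensen prior, R_l = -ln Z(l) and E[p(D|theta)^l] = N_D(l) / Z(l), so
  l n EB_0(pi_J^l, l) = G(l) := E_D[-ln (N_D(l) / Z(l))] - ln Z(l), and stationarity of the
  minimiser reads l* G'(l*) = G(l*).  The posterior has pi-density p(D|theta)^l exp(-n J) / N_D,
  hence KL(rho || pi) = l E_rho[ln p] - n E_rho[J] - ln N_D, while N_D' / N_D = E_rho[ln p - n J'].
  Eliminating E_rho[ln p] expresses n B(rho, l) - KL(rho || pi) per sample through -ln (N_D / Z) and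
  its derivative; taking E_D, the right-hand side becomes l G'(l) - G(l), which vanishes at l*.\<close>

lemma (in prob_space) integral_pos:
  fixes f :: "'a \<Rightarrow> real"
  assumes "integrable M f" "\<And>x. x \<in> space M \<Longrightarrow> 0 < f x"
  shows "0 < expectation f"
proof -
  have "AE x in M. 0 \<le> f x" using assms(2) by (intro AE_I2) (simp add: less_imp_le)
  moreover have "\<not> (AE x in M. f x = 0)"
  proof
    assume "AE x in M. f x = 0"
    then have "AE x in M. False" using AE_space by eventually_elim (use assms(2) in fastforce)
    then show False by (simp add: AE_False)
  qed
  ultimately show ?thesis
    using integral_nonneg_eq_0_iff_AE[OF assms(1)] integral_nonneg_AE[of f M]
    by (simp add: order_less_le)
qed

lemma (in prob_space) one_le_integral_exp_centered:
  fixes X :: "'a \<Rightarrow> real"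
  assumes X: "integrable M X" "AE x in M. 0 \<le> X x" and l: "0 \<le> l"
  shows "1 \<le> (\<integral>x. exp (l * (expectation X - X x)) \<partial>M)"
proof -
  have int: "integrable M (\<lambda>x. exp (l * (expectation X - X x)))"
  proof (rule Bochner_Integration.integrable_bound[OF integrable_const[of "exp (l * expectation X)"]])
    show "(\<lambda>x. exp (l * (expectation X - X x))) \<in> borel_measurable M"
      using X(1) by measurable
    show "AE x in M. norm (exp (l * (expectation X - X x))) \<le> norm (exp (l * expectation X))"
      using X(2) by eventually_elim (use l in \<open>simp add: right_diff_distrib mult_nonneg_nonneg\<close>)
  qed
  have "1 = (\<integral>x. 1 + l * (expectation X - X x) \<partial>M)"
    using X(1) by (simp add: prob_space)
  also have "\<dots> \<le> (\<integral>x. exp (l * (expectation X - X x)) \<partial>M)"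
    using X(1) by (intro integral_mono int) auto
  finally show ?thesis .
qed

lemma DERIV_neg_ln_divide:
  fixes f g :: "real \<Rightarrow> real"
  assumes "(f has_real_derivative f') (at x)" "(g has_real_derivative g') (at x)"
    and "0 < f x" "0 < g x"
  shows "((\<lambda>t. - ln (f t / g t)) has_real_derivative g' / g x - f' / f x) (at x)"
proof -
  have "((\<lambda>t. - ln (f t / g t)) has_real_derivative
      - (1 / (f x / g x) * ((f' * g x - f x * g') / (g x * g x)))) (at x)"
    by (intro DERIV_minus DERIV_chain2[OF DERIV_ln_divide] DERIV_divide assms)
       (use assms in simp_all)
  then show ?thesis by (rule DERIV_cong) (use assms(3,4) in \<open>simp add: field_simps\<close>)
qed

lemma DERIV_local_min_divide_linear:
  fixes G :: "real \<Rightarrow> real"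
  assumes G: "(G has_real_derivative G') (at x)" and "0 < x" "0 < c"
    and min: "\<exists>e>0. \<forall>t. 0 < t \<and> \<bar>t - x\<bar> < e \<longrightarrow> G x / (x * c) \<le> G t / (t * c)"
  shows "x * G' = G x"
proof -
  obtain e where e: "0 < e" "\<forall>t. 0 < t \<and> \<bar>t - x\<bar> < e \<longrightarrow> G x / (x * c) \<le> G t / (t * c)"
    using min by blast
  have "((\<lambda>t. G t / (t * c)) has_real_derivative
      (G' * (x * c) - G x * (1 * c)) / ((x * c) * (x * c))) (at x)"
    by (intro DERIV_divide G) (use assms in \<open>auto intro!: derivative_eq_intros\<close>)
  then have "(G' * (x * c) - G x * (1 * c)) / ((x * c) * (x * c)) = 0"
    by (rule DERIV_local_min[of _ _ _ "min e x"])
       (use e \<open>0 < x\<close> in \<open>auto simp: abs_if split: if_splits\<close>)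
  then show ?thesis using assms(2,3) by (simp add: field_simps)
qed

locale jensen_prior_setting =
  fixes \<nu> :: "('x \<times> 'y) measure" and \<pi> :: "'a measure"
    and p :: "'y \<Rightarrow> 'x \<Rightarrow> 'a \<Rightarrow> real" and n :: nat
  assumes prob_nu: "prob_space \<nu>" and prob_pi: "prob_space \<pi>"
    and p_pos: "\<And>z \<theta>. z \<in> space \<nu> \<Longrightarrow> \<theta> \<in> space \<pi> \<Longrightarrow> p (snd z) (fst z) \<theta> > 0"
    and p_meas: "(\<lambda>(z, \<theta>). p (snd z) (fst z) \<theta>) \<in> borel_measurable (\<nu> \<Otimes>\<^sub>M \<pi>)"
    and loss_nonneg: "\<And>\<theta>. \<theta> \<in> space \<pi> \<Longrightarrow> AE z in \<nu>. loss p z \<theta> \<ge> 0"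
    and loss_integrable: "\<And>\<theta>. \<theta> \<in> space \<pi> \<Longrightarrow> integrable \<nu> (\<lambda>z. loss p z \<theta>)"
begin

sublocale nu: prob_space \<nu> by (fact prob_nu)
sublocale pi: prob_space \<pi> by (fact prob_pi)
sublocale pair_sigma_finite \<nu> \<pi> ..

sublocale sample: prob_space "sample \<nu> n"
  unfolding sample_def by (intro prob_space_PiM prob_nu)

lemma sample_in_space: "D \<in> space (sample \<nu> n) \<Longrightarrow> i < n \<Longrightarrow> D i \<in> space \<nu>"
  by (auto simp: sample_def space_PiM PiE_iff)

lemma measurable_p_swap[measurable]:
  "(\<lambda>x. p (snd (snd x)) (fst (snd x)) (fst x)) \<in> borel_measurable (\<pi> \<Otimes>\<^sub>M \<nu>)"
  using measurable_compose[OF measurable_pair_swap' p_meas] by (simp add: case_prod_beta comp_def)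

lemma measurable_loss_swap[measurable]:
  "(\<lambda>x. loss p (snd x) (fst x)) \<in> borel_measurable (\<pi> \<Otimes>\<^sub>M \<nu>)"
  unfolding loss_def by measurable

lemma measurable_Lexp[measurable]: "Lexp \<nu> p \<in> borel_measurable \<pi>"
  unfolding Lexp_def by (rule nu.borel_measurable_lebesgue_integral) (simp add: case_prod_beta)

lemma measurable_loss[measurable]:
  "(\<lambda>x. loss p (fst x) (snd x)) \<in> borel_measurable (\<nu> \<Otimes>\<^sub>M \<pi>)"
  using p_meas unfolding loss_def by (simp add: case_prod_beta)

lemma measurable_integral_centered_loss:
  fixes f :: "real \<Rightarrow> real"
  assumes [measurable]: "f \<in> borel_measurable borel"
  shows "(\<lambda>\<theta>. \<integral>z. f (Lexp \<nu> p \<theta> - loss p z \<theta>) \<partial>\<nu>) \<in> borel_measurable \<pi>"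
  by (rule nu.borel_measurable_lebesgue_integral) (simp add: case_prod_beta)

lemma measurable_cgf[measurable]: "(\<lambda>\<theta>. cgf \<nu> p \<theta> l) \<in> borel_measurable \<pi>"
  unfolding cgf_def
  using measurable_integral_centered_loss[of "\<lambda>c. exp (l * c)"] by measurable

lemma measurable_lik:
  assumes "D \<in> space (sample \<nu> n)"
  shows "lik p n D \<in> borel_measurable \<pi>"
proof -
  have "(\<lambda>\<theta>. p (snd (D i)) (fst (D i)) \<theta>) \<in> borel_measurable \<pi>" if "i < n" for i
    using measurable_Pair2[OF p_meas sample_in_space[OF assms that]] by simp
  then show ?thesis unfolding lik_def by (intro borel_measurable_prod) auto
qed

lemma lik_pos: "D \<in> space (sample \<nu> n) \<Longrightarrow> \<theta> \<in> space \<pi> \<Longrightarrow> 0 < lik p n D \<theta>"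
  unfolding lik_def by (intro prod_pos) (auto intro: p_pos sample_in_space)

lemma cgf_nonneg:
  assumes "\<theta> \<in> space \<pi>" "0 \<le> l"
  shows "0 \<le> cgf \<nu> p \<theta> l"
  using nu.one_le_integral_exp_centered[OF loss_integrable loss_nonneg, OF assms(1,1,2)]
  by (simp add: cgf_def Lexp_def)

definition jensen_normaliser :: "real \<Rightarrow> real" where
  "jensen_normaliser l = (\<integral>\<theta>. exp (- real n * cgf \<nu> p \<theta> l) \<partial>\<pi>)"

definition gibbs_weight :: "(nat \<Rightarrow> 'x \<times> 'y) \<Rightarrow> real \<Rightarrow> 'a \<Rightarrow> real" where
  "gibbs_weight D l \<theta> = lik p n D \<theta> powr l * exp (- real n * cgf \<nu> p \<theta> l)"

definition gibbs_mass :: "(nat \<Rightarrow> 'x \<times> 'y) \<Rightarrow> real \<Rightarrow> real" where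
  "gibbs_mass D l = (\<integral>\<theta>. gibbs_weight D l \<theta> \<partial>\<pi>)"

definition neg_log_evidence :: "(nat \<Rightarrow> 'x \<times> 'y) \<Rightarrow> real \<Rightarrow> real" where
  "neg_log_evidence D l = - ln (\<integral>\<theta>. lik p n D \<theta> powr l \<partial>jensen_prior \<nu> p n \<pi> l)"

lemma measurable_gibbs_weight:
  assumes "D \<in> space (sample \<nu> n)"
  shows "gibbs_weight D l \<in> borel_measurable \<pi>"
  unfolding gibbs_weight_def[abs_def] using measurable_lik[OF assms] by measurable

lemma jensen_normaliser_pos:
  assumes "0 \<le> l"
  shows "0 < jensen_normaliser l"
  unfolding jensen_normaliser_def
proof (rule pi.integral_pos)
  show "integrable \<pi> (\<lambda>\<theta>. exp (- real n * cgf \<nu> p \<theta> l))"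
    by (rule Bochner_Integration.integrable_bound[OF pi.integrable_const[of "1::real"]])
       (use cgf_nonneg assms in auto)
qed simp

lemma integral_jensen_prior:
  assumes [measurable]: "f \<in> borel_measurable \<pi>"
  shows "(\<integral>\<theta>. f \<theta> \<partial>jensen_prior \<nu> p n \<pi> l)
           = (\<integral>\<theta>. exp (- real n * cgf \<nu> p \<theta> l) * f \<theta> \<partial>\<pi>) / jensen_normaliser l"
proof -
  have "jensen_normaliser l \<ge> 0"
    unfolding jensen_normaliser_def by (rule integral_nonneg_AE) simp
  then have "(\<integral>\<theta>. f \<theta> \<partial>jensen_prior \<nu> p n \<pi> l)
      = (\<integral>\<theta>. (exp (- real n * cgf \<nu> p \<theta> l) / jensen_normaliser l) *\<^sub>R f \<theta> \<partial>\<pi>)"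
    unfolding jensen_prior_def jensen_normaliser_def[symmetric]
    by (intro integral_density) auto
  then show ?thesis by simp
qed

lemma Rterm_jensen_prior: "Rterm \<nu> p n l (jensen_prior \<nu> p n \<pi> l) = - ln (jensen_normaliser l)"
  unfolding Rterm_def
  by (subst integral_jensen_prior) (simp_all add: ln_div pi.prob_space flip: exp_add)

lemma EB0_jensen_prior:
  "EB0 \<nu> p n (jensen_prior \<nu> p n \<pi> l) l
     = ((\<integral>D. neg_log_evidence D l \<partial>sample \<nu> n) - ln (jensen_normaliser l)) / (l * real n)"
  by (simp add: EB0_def neg_log_evidence_def Rterm_jensen_prior diff_divide_distrib)

lemma integral_lik_powr_jensen_prior:
  assumes "D \<in> space (sample \<nu> n)"
  shows "(\<integral>\<theta>. lik p n D \<theta> powr l \<partial>jensen_prior \<nu> p n \<pi> l) = gibbs_mass D l / jensen_normaliser l"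
proof -
  have [measurable]: "lik p n D \<in> borel_measurable \<pi>" using assms by (rule measurable_lik)
  show ?thesis
    unfolding gibbs_mass_def gibbs_weight_def
    by (subst integral_jensen_prior) (simp_all add: mult.commute)
qed

lemma neg_log_evidence_eq:
  "D \<in> space (sample \<nu> n) \<Longrightarrow> neg_log_evidence D l = - ln (gibbs_mass D l / jensen_normaliser l)"
  by (simp add: neg_log_evidence_def integral_lik_powr_jensen_prior)

lemma AE_sample_lik_le_1: "AE D in sample \<nu> n. AE \<theta> in \<pi>. lik p n D \<theta> \<le> 1"
proof -
  have "AE z in \<nu>. AE \<theta> in \<pi>. 0 \<le> loss p z \<theta>"
    using AE_commute[of "\<lambda>z \<theta>. 0 \<le> loss p z \<theta>"] loss_nonneg by simp
  then have components: "AE D in sample \<nu> n. \<forall>i\<in>{..<n}. AE \<theta> in \<pi>. 0 \<le> loss p (D i) \<theta>"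
    unfolding sample_def
    by (intro AE_finite_allI) (auto intro!: AE_PiM_component prob_nu)
  have lik_le_1: "lik p n D \<theta> \<le> 1"
    if "D \<in> space (sample \<nu> n)" "\<theta> \<in> space \<pi>" "\<forall>i<n. 0 \<le> loss p (D i) \<theta>" for D \<theta>
    unfolding lik_def
    using that p_pos[OF sample_in_space[OF that(1)] that(2)]
    by (intro prod_le_1) (auto simp: loss_def less_imp_le)
  show ?thesis
    using components AE_space
  proof eventually_elim
    case (elim D)
    have "AE \<theta> in \<pi>. \<forall>i\<in>{..<n}. 0 \<le> loss p (D i) \<theta>"
      using elim(1) by (intro AE_finite_allI) auto
    then show ?case
      using AE_space by eventually_elim (use lik_le_1 elim(2) in auto)
  qed
qed

lemma
  assumes D: "D \<in> space (sample \<nu> n)" "AE \<theta> in \<pi>. lik p n D \<theta> \<le> 1" and l: "0 \<le> l"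
  shows integrable_gibbs_weight: "integrable \<pi> (gibbs_weight D l)"
    and gibbs_mass_pos: "0 < gibbs_mass D l"
proof -
  have [measurable]: "lik p n D \<in> borel_measurable \<pi>" using D(1) by (rule measurable_lik)
  have pos: "0 < gibbs_weight D l \<theta>" if "\<theta> \<in> space \<pi>" for \<theta>
    using lik_pos[OF D(1) that] by (simp add: gibbs_weight_def)
  have le_1: "gibbs_weight D l \<theta> \<le> 1" if "lik p n D \<theta> \<le> 1" "\<theta> \<in> space \<pi>" for \<theta>
  proof -
    have "lik p n D \<theta> powr l \<le> 1"
      using powr_mono2[OF l _ that(1)] lik_pos[OF D(1) that(2)] by simp
    then show ?thesis
      unfolding gibbs_weight_def using cgf_nonneg[OF that(2) l] by (intro mult_le_one) auto
  qed
  have "AE \<theta> in \<pi>. norm (gibbs_weight D l \<theta>) \<le> norm (1::real)"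
    using D(2) AE_space by eventually_elim (use le_1 pos in \<open>auto simp: less_imp_le\<close>)
  then show int: "integrable \<pi> (gibbs_weight D l)"
    by (intro Bochner_Integration.integrable_bound[OF pi.integrable_const[of "1::real"]]
        measurable_gibbs_weight D(1))
  show "0 < gibbs_mass D l"
    unfolding gibbs_mass_def using int pos by (rule pi.integral_pos)
qed

lemma posterior_eq_density:
  assumes D: "D \<in> space (sample \<nu> n)" and "0 \<le> l"
  shows "posterior \<nu> p n \<pi> l D = density \<pi> (\<lambda>\<theta>. gibbs_weight D l \<theta> / gibbs_mass D l)"
proof -
  have [measurable]: "lik p n D \<in> borel_measurable \<pi>" using D by (rule measurable_lik)
  have Z: "0 < jensen_normaliser l" using \<open>0 \<le> l\<close> by (rule jensen_normaliser_pos)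
  have "posterior \<nu> p n \<pi> l D = density \<pi> (\<lambda>\<theta>.
      ennreal (exp (- real n * cgf \<nu> p \<theta> l) / jensen_normaliser l) *
      ennreal (lik p n D \<theta> powr l / (gibbs_mass D l / jensen_normaliser l)))"
    unfolding posterior_def integral_lik_powr_jensen_prior[OF D]
    unfolding jensen_prior_def jensen_normaliser_def[symmetric]
    by (rule density_density_eq) auto
  also have "\<dots> = density \<pi> (\<lambda>\<theta>. gibbs_weight D l \<theta> / gibbs_mass D l)"
    using Z by (intro density_cong) (auto simp: gibbs_weight_def ennreal_mult'[symmetric] mult_ac)
  finally show ?thesis .
qed

lemma
  assumes "\<theta> \<in> space \<pi>" "0 \<le> l"
    and mgf: "((\<lambda>t. \<integral>z. exp (t * (Lexp \<nu> p \<theta> - loss p z \<theta>)) \<partial>\<nu>) has_real_derivative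
                (\<integral>z. deriv (\<lambda>t. exp (t * (Lexp \<nu> p \<theta> - loss p z \<theta>))) l \<partial>\<nu>)) (at l)"
  shows cgf_DERIV: "(cgf \<nu> p \<theta> has_real_derivative cgf' \<nu> p \<theta> l) (at l)"
    and cgf'_eq: "cgf' \<nu> p \<theta> l =
      (\<integral>z. (Lexp \<nu> p \<theta> - loss p z \<theta>) * exp (l * (Lexp \<nu> p \<theta> - loss p z \<theta>)) \<partial>\<nu>) /
      (\<integral>z. exp (l * (Lexp \<nu> p \<theta> - loss p z \<theta>)) \<partial>\<nu>)"
proof -
  have deriv_exp: "deriv (\<lambda>t. exp (t * c)) l = c * exp (l * c)" for c
    by (rule DERIV_imp_deriv) (auto intro!: derivative_eq_intros)
  have "0 < (\<integral>z. exp (l * (Lexp \<nu> p \<theta> - loss p z \<theta>)) \<partial>\<nu>)"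
    using nu.one_le_integral_exp_centered[OF loss_integrable loss_nonneg, OF assms(1,1,2)]
    by (simp add: Lexp_def)
  then have "(cgf \<nu> p \<theta> has_real_derivative
      (\<integral>z. (Lexp \<nu> p \<theta> - loss p z \<theta>) * exp (l * (Lexp \<nu> p \<theta> - loss p z \<theta>)) \<partial>\<nu>) /
      (\<integral>z. exp (l * (Lexp \<nu> p \<theta> - loss p z \<theta>)) \<partial>\<nu>)) (at l)"
    unfolding cgf_def[abs_def]
    using DERIV_chain2[OF DERIV_ln_divide mgf] unfolding deriv_exp
    by (simp add: divide_inverse mult.commute)
  then show "(cgf \<nu> p \<theta> has_real_derivative cgf' \<nu> p \<theta> l) (at l)"
    and "cgf' \<nu> p \<theta> l =
      (\<integral>z. (Lexp \<nu> p \<theta> - loss p z \<theta>) * exp (l * (Lexp \<nu> p \<theta> - loss p z \<theta>)) \<partial>\<nu>) /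
      (\<integral>z. exp (l * (Lexp \<nu> p \<theta> - loss p z \<theta>)) \<partial>\<nu>)"
    by (simp_all add: cgf'_def DERIV_imp_deriv)
qed

lemma measurable_cgf':
  assumes "0 \<le> l"
    and "\<And>\<theta>. \<theta> \<in> space \<pi> \<Longrightarrow>
      ((\<lambda>t. \<integral>z. exp (t * (Lexp \<nu> p \<theta> - loss p z \<theta>)) \<partial>\<nu>) has_real_derivative
        (\<integral>z. deriv (\<lambda>t. exp (t * (Lexp \<nu> p \<theta> - loss p z \<theta>))) l \<partial>\<nu>)) (at l)"
  shows "(\<lambda>\<theta>. cgf' \<nu> p \<theta> l) \<in> borel_measurable \<pi>"
proof (subst measurable_cong)
  show "cgf' \<nu> p \<theta> l =
      (\<integral>z. (Lexp \<nu> p \<theta> - loss p z \<theta>) * exp (l * (Lexp \<nu> p \<theta> - loss p z \<theta>)) \<partial>\<nu>) /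
      (\<integral>z. exp (l * (Lexp \<nu> p \<theta> - loss p z \<theta>)) \<partial>\<nu>)" if "\<theta> \<in> space \<pi>" for \<theta>
    using cgf'_eq[OF that assms(1) assms(2)[OF that]] .
  show "(\<lambda>\<theta>. (\<integral>z. (Lexp \<nu> p \<theta> - loss p z \<theta>) * exp (l * (Lexp \<nu> p \<theta> - loss p z \<theta>)) \<partial>\<nu>) /
      (\<integral>z. exp (l * (Lexp \<nu> p \<theta> - loss p z \<theta>)) \<partial>\<nu>)) \<in> borel_measurable \<pi>"
    using measurable_integral_centered_loss[of "\<lambda>c. c * exp (l * c)"]
      measurable_integral_centered_loss[of "\<lambda>c. exp (l * c)"] by measurable
qed

definition gibbs_score :: "(nat \<Rightarrow> 'x \<times> 'y) \<Rightarrow> real \<Rightarrow> 'a \<Rightarrow> real" where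
  "gibbs_score D l \<theta> = ln (lik p n D \<theta>) - real n * cgf' \<nu> p \<theta> l"

lemma gibbs_weight_DERIV:
  assumes "D \<in> space (sample \<nu> n)" "\<theta> \<in> space \<pi>"
    and "(cgf \<nu> p \<theta> has_real_derivative cgf' \<nu> p \<theta> l) (at l)"
  shows "((\<lambda>t. gibbs_weight D t \<theta>) has_real_derivative gibbs_weight D l \<theta> * gibbs_score D l \<theta>) (at l)"
proof -
  have "gibbs_weight D t \<theta> = exp (t * ln (lik p n D \<theta>) - real n * cgf \<nu> p \<theta> t)" for t
    using lik_pos[OF assms(1,2)] by (simp add: gibbs_weight_def powr_def exp_diff exp_minus field_simps)
  then show ?thesis
    unfolding gibbs_score_def
    by (simp only:) (auto intro!: derivative_eq_intros assms(3) simp: algebra_simps)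
qed

lemma gibbs_mass_DERIV:
  assumes D: "D \<in> space (sample \<nu> n)"
    and cgf: "\<And>\<theta>. \<theta> \<in> space \<pi> \<Longrightarrow> (cgf \<nu> p \<theta> has_real_derivative cgf' \<nu> p \<theta> l) (at l)"
    and int: "integrable \<pi> (\<lambda>\<theta>. deriv (\<lambda>t. gibbs_weight D t \<theta>) l)"
    and mass: "(gibbs_mass D has_real_derivative (\<integral>\<theta>. deriv (\<lambda>t. gibbs_weight D t \<theta>) l \<partial>\<pi>)) (at l)"
  shows "(gibbs_mass D has_real_derivative
           (\<integral>\<theta>. gibbs_weight D l \<theta> * gibbs_score D l \<theta> \<partial>\<pi>)) (at l)"
    and "integrable \<pi> (\<lambda>\<theta>. gibbs_weight D l \<theta> * gibbs_score D l \<theta>)"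
proof -
  have eq: "deriv (\<lambda>t. gibbs_weight D t \<theta>) l = gibbs_weight D l \<theta> * gibbs_score D l \<theta>"
    if "\<theta> \<in> space \<pi>" for \<theta>
    using DERIV_imp_deriv[OF gibbs_weight_DERIV[OF D that cgf[OF that]]] .
  show "(gibbs_mass D has_real_derivative
      (\<integral>\<theta>. gibbs_weight D l \<theta> * gibbs_score D l \<theta> \<partial>\<pi>)) (at l)"
    using mass by (simp add: eq cong: Bochner_Integration.integral_cong)
  show "integrable \<pi> (\<lambda>\<theta>. gibbs_weight D l \<theta> * gibbs_score D l \<theta>)"
    using int by (simp add: eq cong: Bochner_Integration.integrable_cong)
qed

lemma KL_posterior:
  assumes D: "D \<in> space (sample \<nu> n)" "AE \<theta> in \<pi>. lik p n D \<theta> \<le> 1" and l: "0 \<le> l"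
    and [measurable]: "(\<lambda>\<theta>. cgf' \<nu> p \<theta> l) \<in> borel_measurable \<pi>"
    and int_score: "integrable \<pi> (\<lambda>\<theta>. gibbs_weight D l \<theta> * gibbs_score D l \<theta>)"
    and int_B: "integrable (posterior \<nu> p n \<pi> l D) (\<lambda>\<theta>. l * cgf' \<nu> p \<theta> l - cgf \<nu> p \<theta> l)"
  shows "KL (posterior \<nu> p n \<pi> l D) \<pi>
           = l * (\<integral>\<theta>. gibbs_weight D l \<theta> * gibbs_score D l \<theta> \<partial>\<pi>) / gibbs_mass D l
             + real n * Bterm \<nu> p (posterior \<nu> p n \<pi> l D) l - ln (gibbs_mass D l)"
proof -
  have [measurable]: "lik p n D \<in> borel_measurable \<pi>" using D(1) by (rule measurable_lik)
  define N where "N = gibbs_mass D l"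
  define w where "w \<theta> = gibbs_weight D l \<theta> / N" for \<theta>
  define A where "A \<theta> = l * cgf' \<nu> p \<theta> l - cgf \<nu> p \<theta> l" for \<theta>
  have N: "0 < N" unfolding N_def using D l by (rule gibbs_mass_pos)
  have [measurable]: "gibbs_weight D l \<in> borel_measurable \<pi>"
    using D(1) by (rule measurable_gibbs_weight)
  have [measurable]: "w \<in> borel_measurable \<pi>"
    unfolding w_def[abs_def] by (intro borel_measurable_divide) simp_all
  have [measurable]: "A \<in> borel_measurable \<pi>"
    unfolding A_def[abs_def] by measurable
  have w_pos: "0 < w \<theta>" if "\<theta> \<in> space \<pi>" for \<theta>
    using lik_pos[OF D(1) that] N by (simp add: w_def gibbs_weight_def)
  then have w_nonneg: "AE \<theta> in \<pi>. 0 \<le> w \<theta>" by (intro AE_I2) (simp add: less_imp_le)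
  have post: "posterior \<nu> p n \<pi> l D = density \<pi> w"
    unfolding w_def N_def using D(1) l by (rule posterior_eq_density)
  have int_w: "integrable \<pi> w"
    unfolding w_def using integrable_gibbs_weight[OF D l] by simp
  have int_wA: "integrable \<pi> (\<lambda>\<theta>. w \<theta> * A \<theta>)"
    using int_B w_nonneg by (simp add: post A_def[symmetric] integrable_density)
  have B: "Bterm \<nu> p (posterior \<nu> p n \<pi> l D) l = (\<integral>\<theta>. w \<theta> * A \<theta> \<partial>\<pi>)"
    using w_nonneg by (simp add: Bterm_def post A_def[symmetric] integral_density)
  have ln_w: "w \<theta> * ln (w \<theta>)
      = l * (gibbs_weight D l \<theta> * gibbs_score D l \<theta> / N) + real n * (w \<theta> * A \<theta>) - ln N * w \<theta>"
    if "\<theta> \<in> space \<pi>" for \<theta>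
  proof -
    have "ln (w \<theta>) = l * ln (lik p n D \<theta>) - real n * cgf \<nu> p \<theta> l - ln N"
      using lik_pos[OF D(1) that] N by (simp add: w_def gibbs_weight_def ln_div ln_mult)
    then have "w \<theta> * ln (w \<theta>) = w \<theta> * (l * ln (lik p n D \<theta>) - real n * cgf \<nu> p \<theta> l - ln N)"
      by simp
    also have "\<dots> = l * (gibbs_weight D l \<theta> * gibbs_score D l \<theta> / N) + real n * (w \<theta> * A \<theta>)
        - ln N * w \<theta>"
      using N by (simp add: w_def gibbs_score_def A_def field_simps)
    finally show ?thesis .
  qed
  have "KL (posterior \<nu> p n \<pi> l D) \<pi> = (\<integral>\<theta>. w \<theta> * ln (w \<theta>) \<partial>\<pi>)"
    unfolding KL_def post using w_nonneg by (subst pi.KL_density) (auto simp: log_def)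
  also have "\<dots> = (\<integral>\<theta>. l * (gibbs_weight D l \<theta> * gibbs_score D l \<theta> / N)
      + real n * (w \<theta> * A \<theta>) - ln N * w \<theta> \<partial>\<pi>)"
    by (rule Bochner_Integration.integral_cong[OF refl ln_w])
  also have "\<dots> = l * (\<integral>\<theta>. gibbs_weight D l \<theta> * gibbs_score D l \<theta> \<partial>\<pi>) / N
      + real n * (\<integral>\<theta>. w \<theta> * A \<theta> \<partial>\<pi>) - ln N * (\<integral>\<theta>. w \<theta> \<partial>\<pi>)"
    using int_score int_wA int_w by simp
  also have "(\<integral>\<theta>. w \<theta> \<partial>\<pi>) = 1"
    using N by (simp add: w_def N_def gibbs_mass_def)
  finally show ?thesis by (simp add: B N_def)
qed

lemma Bterm_KL_posterior_identity:
  assumes D: "D \<in> space (sample \<nu> n)" "AE \<theta> in \<pi>. lik p n D \<theta> \<le> 1" and l: "0 \<le> l"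
    and cgf: "\<And>\<theta>. \<theta> \<in> space \<pi> \<Longrightarrow> (cgf \<nu> p \<theta> has_real_derivative cgf' \<nu> p \<theta> l) (at l)"
    and [measurable]: "(\<lambda>\<theta>. cgf' \<nu> p \<theta> l) \<in> borel_measurable \<pi>"
    and int_deriv: "integrable \<pi> (\<lambda>\<theta>. deriv (\<lambda>t. gibbs_weight D t \<theta>) l)"
    and mass: "(gibbs_mass D has_real_derivative (\<integral>\<theta>. deriv (\<lambda>t. gibbs_weight D t \<theta>) l \<partial>\<pi>)) (at l)"
    and Z: "(jensen_normaliser has_real_derivative Z') (at l)"
    and int_B: "integrable (posterior \<nu> p n \<pi> l D) (\<lambda>\<theta>. l * cgf' \<nu> p \<theta> l - cgf \<nu> p \<theta> l)"
  shows "real n * Bterm \<nu> p (posterior \<nu> p n \<pi> l D) l - KL (posterior \<nu> p n \<pi> l D) \<pi>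
           = l * deriv (neg_log_evidence D) l - neg_log_evidence D l
             + ln (jensen_normaliser l) - l * Z' / jensen_normaliser l"
proof -
  define N' where "N' = (\<integral>\<theta>. gibbs_weight D l \<theta> * gibbs_score D l \<theta> \<partial>\<pi>)"
  have N: "0 < gibbs_mass D l" using D l by (rule gibbs_mass_pos)
  have Z_pos: "0 < jensen_normaliser l" using l by (rule jensen_normaliser_pos)
  have "(neg_log_evidence D has_real_derivative Z' / jensen_normaliser l - N' / gibbs_mass D l) (at l)"
    unfolding neg_log_evidence_eq[OF D(1), abs_def] N'_def
    by (rule DERIV_neg_ln_divide[OF gibbs_mass_DERIV(1)[OF D(1) cgf int_deriv mass] Z N Z_pos])
  then have "deriv (neg_log_evidence D) l = Z' / jensen_normaliser l - N' / gibbs_mass D l"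
    by (rule DERIV_imp_deriv)
  moreover have "neg_log_evidence D l = ln (jensen_normaliser l) - ln (gibbs_mass D l)"
    using N Z_pos by (simp add: neg_log_evidence_eq[OF D(1)] ln_div)
  moreover have "KL (posterior \<nu> p n \<pi> l D) \<pi>
      = l * N' / gibbs_mass D l + real n * Bterm \<nu> p (posterior \<nu> p n \<pi> l D) l - ln (gibbs_mass D l)"
    unfolding N'_def
    by (rule KL_posterior[OF D l _ gibbs_mass_DERIV(2)[OF D(1) cgf int_deriv mass] int_B]) simp
  ultimately show ?thesis
    using N Z_pos by (simp only:) (simp add: field_simps)
qed

lemma expectation_Bterm_KL_posterior:
  assumes l: "0 \<le> l"
    and cgf: "\<And>\<theta>. \<theta> \<in> space \<pi> \<Longrightarrow> (cgf \<nu> p \<theta> has_real_derivative cgf' \<nu> p \<theta> l) (at l)"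
    and cgf'_meas: "(\<lambda>\<theta>. cgf' \<nu> p \<theta> l) \<in> borel_measurable \<pi>"
    and mass: "\<And>D. D \<in> space (sample \<nu> n) \<Longrightarrow>
      integrable \<pi> (\<lambda>\<theta>. deriv (\<lambda>t. gibbs_weight D t \<theta>) l) \<and>
      (gibbs_mass D has_real_derivative (\<integral>\<theta>. deriv (\<lambda>t. gibbs_weight D t \<theta>) l \<partial>\<pi>)) (at l)"
    and Z: "(jensen_normaliser has_real_derivative Z') (at l)"
    and int_B: "\<And>D. D \<in> space (sample \<nu> n) \<Longrightarrow>
      integrable (posterior \<nu> p n \<pi> l D) (\<lambda>\<theta>. l * cgf' \<nu> p \<theta> l - cgf \<nu> p \<theta> l)"
    and int_Bterm: "integrable (sample \<nu> n) (\<lambda>D. Bterm \<nu> p (posterior \<nu> p n \<pi> l D) l)"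
    and int_KL: "integrable (sample \<nu> n) (\<lambda>D. KL (posterior \<nu> p n \<pi> l D) \<pi>)"
    and int_Q: "integrable (sample \<nu> n) (\<lambda>D. neg_log_evidence D l)"
    and int_dQ: "integrable (sample \<nu> n) (\<lambda>D. deriv (neg_log_evidence D) l)"
  shows "real n * (\<integral>D. Bterm \<nu> p (posterior \<nu> p n \<pi> l D) l \<partial>sample \<nu> n)
           - (\<integral>D. KL (posterior \<nu> p n \<pi> l D) \<pi> \<partial>sample \<nu> n)
         = l * (\<integral>D. deriv (neg_log_evidence D) l \<partial>sample \<nu> n) - (\<integral>D. neg_log_evidence D l \<partial>sample \<nu> n)
           + ln (jensen_normaliser l) - l * Z' / jensen_normaliser l"
proof -
  have "AE D in sample \<nu> n.
      real n * Bterm \<nu> p (posterior \<nu> p n \<pi> l D) l - KL (posterior \<nu> p n \<pi> l D) \<pi>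
      = l * deriv (neg_log_evidence D) l - neg_log_evidence D l
        + ln (jensen_normaliser l) - l * Z' / jensen_normaliser l"
    using AE_sample_lik_le_1 AE_space
    by eventually_elim (use mass int_B in \<open>blast intro: Bterm_KL_posterior_identity l cgf cgf'_meas Z\<close>)
  then have "(\<integral>D. real n * Bterm \<nu> p (posterior \<nu> p n \<pi> l D) l
        - KL (posterior \<nu> p n \<pi> l D) \<pi> \<partial>sample \<nu> n)
      = (\<integral>D. l * deriv (neg_log_evidence D) l - neg_log_evidence D l
        + ln (jensen_normaliser l) - l * Z' / jensen_normaliser l \<partial>sample \<nu> n)"
    by (intro integral_cong_AE) (use int_Q int_dQ int_Bterm int_KL in auto)
  then show ?thesis
    using int_Q int_dQ int_Bterm int_KL by (simp add: sample.prob_space)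
qed

lemma EB0_jensen_prior_stationary:
  assumes l: "0 < l" and n: "0 < n"
    and Z: "(jensen_normaliser has_real_derivative Z') (at l)"
    and H: "((\<lambda>t. \<integral>D. neg_log_evidence D t \<partial>sample \<nu> n) has_real_derivative H') (at l)"
    and min: "\<exists>e>0. \<forall>t. t > 0 \<and> \<bar>t - l\<bar> < e \<longrightarrow>
      EB0 \<nu> p n (jensen_prior \<nu> p n \<pi> l) l \<le> EB0 \<nu> p n (jensen_prior \<nu> p n \<pi> t) t"
  shows "l * (H' - Z' / jensen_normaliser l)
           = (\<integral>D. neg_log_evidence D l \<partial>sample \<nu> n) - ln (jensen_normaliser l)"
proof -
  have Z_pos: "0 < jensen_normaliser l" using l by (intro jensen_normaliser_pos) simp
  have "((\<lambda>t. ln (jensen_normaliser t)) has_real_derivative 1 / jensen_normaliser l * Z') (at l)"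
    by (rule DERIV_chain2[OF DERIV_ln_divide[OF Z_pos] Z])
  then have "((\<lambda>t. (\<integral>D. neg_log_evidence D t \<partial>sample \<nu> n) - ln (jensen_normaliser t))
      has_real_derivative H' - Z' / jensen_normaliser l) (at l)"
    using H by (auto intro: DERIV_diff)
  then show ?thesis
    using min l n by (intro DERIV_local_min_divide_linear) (simp_all add: EB0_jensen_prior)
qed

end

theorem mainTheorem9:
  fixes \<nu> :: "('x \<times> 'y) measure" and \<pi> :: "'a measure"
    and p :: "'y \<Rightarrow> 'x \<Rightarrow> 'a \<Rightarrow> real" and n :: nat and lstar :: real
  assumes nu: "prob_space \<nu>" and pri: "prob_space \<pi>" and n_pos: "n > 0"
    and p_pos: "\<And>z \<theta>. z \<in> space \<nu> \<Longrightarrow> \<theta> \<in> space \<pi> \<Longrightarrow> p (snd z) (fst z) \<theta> > 0"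
    and p_meas: "(\<lambda>(z, \<theta>). p (snd z) (fst z) \<theta>) \<in> borel_measurable (\<nu> \<Otimes>\<^sub>M \<pi>)"
    and loss_nonneg: "\<And>\<theta>. \<theta> \<in> space \<pi> \<Longrightarrow> AE z in \<nu>. loss p z \<theta> \<ge> 0"
    and L_finite: "\<And>\<theta>. \<theta> \<in> space \<pi> \<Longrightarrow> integrable \<nu> (\<lambda>z. loss p z \<theta>)"
    and lstar_pos: "lstar > 0"
    and local_min: "\<exists>e>0. \<forall>l. l > 0 \<and> \<bar>l - lstar\<bar> < e \<longrightarrow>
                      EB0 \<nu> p n (jensen_prior \<nu> p n \<pi> lstar) lstar \<le> EB0 \<nu> p n (jensen_prior \<nu> p n \<pi> l) l"
    and differentiable: "(\<lambda>l. EB0 \<nu> p n (jensen_prior \<nu> p n \<pi> l) l) differentiable (at lstar)"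
    \<comment> \<open>the derivative may be computed by differentiating under E_\<nu>\<close>
    and diff_nu: "\<And>\<theta>. \<theta> \<in> space \<pi> \<Longrightarrow>
        integrable \<nu> (\<lambda>z. deriv (\<lambda>l. exp (l * (Lexp \<nu> p \<theta> - loss p z \<theta>))) lstar) \<and>
        ((\<lambda>l. \<integral>z. exp (l * (Lexp \<nu> p \<theta> - loss p z \<theta>)) \<partial>\<nu>) has_real_derivative
           (\<integral>z. deriv (\<lambda>l. exp (l * (Lexp \<nu> p \<theta> - loss p z \<theta>))) lstar \<partial>\<nu>)) (at lstar)"
    \<comment> \<open>... under E_\<pi> (expectations w.r.t. the Jensen prior written as E_\<pi> with its density)\<close>
    and diff_pi_num: "\<And>D. D \<in> space (sample \<nu> n) \<Longrightarrow>
        integrable \<pi> (\<lambda>\<theta>. deriv (\<lambda>l. lik p n D \<theta> powr l * exp (- real n * cgf \<nu> p \<theta> l)) lstar) \<and>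
        ((\<lambda>l. \<integral>\<theta>. lik p n D \<theta> powr l * exp (- real n * cgf \<nu> p \<theta> l) \<partial>\<pi>) has_real_derivative
           (\<integral>\<theta>. deriv (\<lambda>l. lik p n D \<theta> powr l * exp (- real n * cgf \<nu> p \<theta> l)) lstar \<partial>\<pi>)) (at lstar)"
    and diff_pi_den:
        "integrable \<pi> (\<lambda>\<theta>. deriv (\<lambda>l. exp (- real n * cgf \<nu> p \<theta> l)) lstar) \<and>
        ((\<lambda>l. \<integral>\<theta>. exp (- real n * cgf \<nu> p \<theta> l) \<partial>\<pi>) has_real_derivative
           (\<integral>\<theta>. deriv (\<lambda>l. exp (- real n * cgf \<nu> p \<theta> l)) lstar \<partial>\<pi>)) (at lstar)"
    \<comment> \<open>... and under E_{D ~ \<nu>^n}\<close>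
    and diff_D:
        "integrable (sample \<nu> n) (\<lambda>D. - ln (\<integral>\<theta>. lik p n D \<theta> powr lstar \<partial>jensen_prior \<nu> p n \<pi> lstar)) \<and>
         integrable (sample \<nu> n)
           (\<lambda>D. deriv (\<lambda>l. - ln (\<integral>\<theta>. lik p n D \<theta> powr l \<partial>jensen_prior \<nu> p n \<pi> l)) lstar) \<and>
        ((\<lambda>l. \<integral>D. - ln (\<integral>\<theta>. lik p n D \<theta> powr l \<partial>jensen_prior \<nu> p n \<pi> l) \<partial>sample \<nu> n)
           has_real_derivative
         (\<integral>D. deriv (\<lambda>l. - ln (\<integral>\<theta>. lik p n D \<theta> powr l \<partial>jensen_prior \<nu> p n \<pi> l)) lstar
            \<partial>sample \<nu> n)) (at lstar)"
    \<comment> \<open>all quantities in the conclusion are finite\<close>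
    and B_int_rho: "\<And>D. D \<in> space (sample \<nu> n) \<Longrightarrow>
        integrable (posterior \<nu> p n \<pi> lstar D) (\<lambda>\<theta>. lstar * cgf' \<nu> p \<theta> lstar - cgf \<nu> p \<theta> lstar)"
    and B_int_D: "integrable (sample \<nu> n) (\<lambda>D. Bterm \<nu> p (posterior \<nu> p n \<pi> lstar D) lstar)"
    and KL_int_rho: "\<And>D. D \<in> space (sample \<nu> n) \<Longrightarrow>
        integrable (posterior \<nu> p n \<pi> lstar D) (entropy_density (exp 1) \<pi> (posterior \<nu> p n \<pi> lstar D))"
    and KL_int_D: "integrable (sample \<nu> n) (\<lambda>D. KL (posterior \<nu> p n \<pi> lstar D) \<pi>)"
  shows "(\<integral>D. Bterm \<nu> p (posterior \<nu> p n \<pi> lstar D) lstar \<partial>sample \<nu> n)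
           = 1 / real n * (\<integral>D. KL (posterior \<nu> p n \<pi> lstar D) \<pi> \<partial>sample \<nu> n)"
proof -
  interpret jensen_prior_setting \<nu> \<pi> p n
    using nu pri p_pos p_meas loss_nonneg L_finite by (rule jensen_prior_setting.intro)
  have l: "0 \<le> lstar" using lstar_pos by simp
  have cgf: "(cgf \<nu> p \<theta> has_real_derivative cgf' \<nu> p \<theta> lstar) (at lstar)" if "\<theta> \<in> space \<pi>" for \<theta>
    using cgf_DERIV[OF that l] diff_nu[OF that] by blast
  have cgf'_meas: "(\<lambda>\<theta>. cgf' \<nu> p \<theta> lstar) \<in> borel_measurable \<pi>"
    using measurable_cgf'[OF l] diff_nu by blast
  define Z' where "Z' = (\<integral>\<theta>. deriv (\<lambda>l. exp (- real n * cgf \<nu> p \<theta> l)) lstar \<partial>\<pi>)"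
  have Z: "(jensen_normaliser has_real_derivative Z') (at lstar)"
    using diff_pi_den by (simp add: Z'_def jensen_normaliser_def[abs_def])
  define H where "H l = (\<integral>D. neg_log_evidence D l \<partial>sample \<nu> n)" for l
  define H' where "H' = (\<integral>D. deriv (neg_log_evidence D) lstar \<partial>sample \<nu> n)"
  have int_Q: "integrable (sample \<nu> n) (\<lambda>D. neg_log_evidence D lstar)"
    and int_dQ: "integrable (sample \<nu> n) (\<lambda>D. deriv (neg_log_evidence D) lstar)"
    and H: "(H has_real_derivative H') (at lstar)"
    using diff_D by (simp_all add: H_def[abs_def] H'_def neg_log_evidence_def[abs_def])
  have stationary: "lstar * (H' - Z' / jensen_normaliser lstar) = H lstar - ln (jensen_normaliser lstar)"
    unfolding H_def using lstar_pos n_pos Z H[unfolded H_def] local_min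
    by (rule EB0_jensen_prior_stationary)
  have mass: "integrable \<pi> (\<lambda>\<theta>. deriv (\<lambda>t. gibbs_weight D t \<theta>) lstar) \<and>
      (gibbs_mass D has_real_derivative (\<integral>\<theta>. deriv (\<lambda>t. gibbs_weight D t \<theta>) lstar \<partial>\<pi>)) (at lstar)"
    if "D \<in> space (sample \<nu> n)" for D
    unfolding gibbs_weight_def[abs_def] gibbs_mass_def[abs_def] using that by (rule diff_pi_num)
  have "real n * (\<integral>D. Bterm \<nu> p (posterior \<nu> p n \<pi> lstar D) lstar \<partial>sample \<nu> n)
      - (\<integral>D. KL (posterior \<nu> p n \<pi> lstar D) \<pi> \<partial>sample \<nu> n)
      = lstar * H' - H lstar + ln (jensen_normaliser lstar) - lstar * Z' / jensen_normaliser lstar"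
    unfolding H_def H'_def
    by (rule expectation_Bterm_KL_posterior[OF l cgf cgf'_meas mass Z B_int_rho B_int_D KL_int_D
          int_Q int_dQ])
  with stationary n_pos show ?thesis by (simp add: field_simps)
qed

end
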